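(* Let $k$ be a positive integer and let $T = (V, E)$ be a $k$-good graph. Then there exists a multiset $\mathbf{Msets}$ of subsets of $V$ such that: (a) for any two different members $X, Y$ of $\mathbf{Msets}$, $|X \cap Y| < 2$; (b) every $X \in \mathbf{Msets}$ is a clique in $T$; (c) for every $u \in V$, there are exactly $k$ members $X$ of $\mathbf{Msets}$ (counted with multiplicity) with $u \in X$; (d) for every edge $uv \in E$, there is exactly one member $X \in \mathbf{Msets}$ with $u, v \in X$.
   Context: A finite simple undirected graph $T$ is $k$-good if for every vertex $u$ of $T$, the neighbourhood $N_T(u)$ can be partitioned into $k$ pairwise disjoint (possibly empty) subsets $S_1(u), \dots, S_k(u)$ such that each nonempty $S_i(u)$ is a clique of $T$ and no edge of $T$ joins a vertex of $S_i(u)$ to a vertex of $S_j(u)$ for distinct $i,j$. *)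

theory Defs
  imports Main "HOL-Library.Multiset"
begin

definition simple_graph :: "'a set \<Rightarrow> ('a \<Rightarrow> 'a \<Rightarrow> bool) \<Rightarrow> bool" where
  "simple_graph V E \<longleftrightarrow> finite V \<and> (\<forall>u v. E u v \<longrightarrow> u \<in> V \<and> v \<in> V)
     \<and> (\<forall>u v. E u v \<longrightarrow> E v u) \<and> (\<forall>u. \<not> E u u)"

definition nbhd :: "('a \<Rightarrow> 'a \<Rightarrow> bool) \<Rightarrow> 'a \<Rightarrow> 'a set" where
  "nbhd E u = {v. E u v}"

definition is_clique :: "'a set \<Rightarrow> ('a \<Rightarrow> 'a \<Rightarrow> bool) \<Rightarrow> 'a set \<Rightarrow> bool" where
  "is_clique V E X \<longleftrightarrow> X \<subseteq> V \<and> (\<forall>x\<in>X. \<forall>y\<in>X. x \<noteq> y \<longrightarrow> E x y)"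

definition k_good :: "nat \<Rightarrow> 'a set \<Rightarrow> ('a \<Rightarrow> 'a \<Rightarrow> bool) \<Rightarrow> bool" where
  "k_good k V E \<longleftrightarrow> (\<forall>u\<in>V. \<exists>S :: nat \<Rightarrow> 'a set.
      (\<Union>i\<in>{1..k}. S i) = nbhd E u
    \<and> (\<forall>i\<in>{1..k}. \<forall>j\<in>{1..k}. i \<noteq> j \<longrightarrow> S i \<inter> S j = {})
    \<and> (\<forall>i\<in>{1..k}. S i \<noteq> {} \<longrightarrow> is_clique V E (S i))
    \<and> (\<forall>i\<in>{1..k}. \<forall>j\<in>{1..k}. i \<noteq> j \<longrightarrow> (\<forall>x\<in>S i. \<forall>y\<in>S j. \<not> E x y)))"

end

theory Submission
  imports Defs
begin

text \<open>For an edge \<open>uv\<close>, the set of \<open>u\<close>, \<open>v\<close> and their common neighbours equals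
  \<open>{u} \<union> S\<^sub>i(u)\<close> for the part \<open>S\<^sub>i(u)\<close> containing \<open>v\<close>, since there are no edges between
  different parts. Hence it is a clique, and it is determined by any two of its vertices.
  These edge cliques therefore cover every edge exactly once and meet pairwise in at most
  one vertex, and a vertex \<open>u\<close> lies in at most \<open>k\<close> of them, one per part of \<open>N(u)\<close>.
  Adding copies of the singleton \<open>{u}\<close> raises the count at each vertex to exactly \<open>k\<close>.\<close>

definition edge_clique :: "('a \<Rightarrow> 'a \<Rightarrow> bool) \<Rightarrow> 'a \<Rightarrow> 'a \<Rightarrow> 'a set" where
  "edge_clique E u v = {u, v} \<union> {w. E u w \<and> E v w}"

lemma clique_subset_edge_clique:
  assumes "is_clique V E C" "a \<in> C" "b \<in> C" "a \<noteq> b"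
  shows "C \<subseteq> edge_clique E a b"
  using assms unfolding is_clique_def edge_clique_def by auto

definition singleton_padding :: "'a set \<Rightarrow> ('a \<Rightarrow> nat) \<Rightarrow> 'a set multiset" where
  "singleton_padding V f = (\<Sum>w\<in>V. replicate_mset (f w) {w})"

lemma count_singleton_padding:
  "count (singleton_padding V f) {u} = (if finite V \<and> u \<in> V then f u else 0)"
  unfolding singleton_padding_def count_sum by (cases "finite V") simp_all

lemma mem_singleton_padding:
  assumes "X \<in># singleton_padding V f"
  shows "\<exists>w\<in>V. X = {w}"
proof -
  have "finite V"
    using assms by (metis singleton_padding_def sum.infinite empty_iff set_mset_empty)
  then show ?thesis
    using assms by (auto simp: singleton_padding_def set_mset_sum split: if_splits)
qed

lemma size_filter_singleton_padding:
  assumes "finite V" "u \<in> V"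
  shows "size (filter_mset (\<lambda>X. u \<in> X) (singleton_padding V f)) = f u"
proof -
  have "filter_mset (\<lambda>X. u \<in> X) (singleton_padding V f)
      = filter_mset (\<lambda>X. X = {u}) (singleton_padding V f)"
    by (rule filter_mset_cong) (auto dest: mem_singleton_padding)
  then show ?thesis
    using assms by (simp add: filter_eq_replicate_mset count_singleton_padding)
qed

lemma filter_singleton_padding_two:
  assumes "u \<noteq> v"
  shows "filter_mset (\<lambda>X. u \<in> X \<and> v \<in> X) (singleton_padding V f) = {#}"
  using assms by (auto dest: mem_singleton_padding)

definition edge_cliques :: "('a \<Rightarrow> 'a \<Rightarrow> bool) \<Rightarrow> 'a set set" where
  "edge_cliques E = {edge_clique E u v | u v. E u v}"

definition clique_cover :: "nat \<Rightarrow> 'a set \<Rightarrow> ('a \<Rightarrow> 'a \<Rightarrow> bool) \<Rightarrow> 'a set multiset" where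
  "clique_cover k V E = mset_set (edge_cliques E)
     + singleton_padding V (\<lambda>u. k - card {X \<in> edge_cliques E. u \<in> X})"

locale partitioned_graph =
  fixes k :: nat and V :: "'a set" and E :: "'a \<Rightarrow> 'a \<Rightarrow> bool"
    and S :: "'a \<Rightarrow> nat \<Rightarrow> 'a set"
  assumes simple: "simple_graph V E"
    and parts_cover: "u \<in> V \<Longrightarrow> (\<Union>i\<in>{1..k}. S u i) = nbhd E u"
    and part_clique: "u \<in> V \<Longrightarrow> i \<in> {1..k} \<Longrightarrow> S u i \<noteq> {} \<Longrightarrow> is_clique V E (S u i)"
    and no_edge_between_parts: "u \<in> V \<Longrightarrow> i \<in> {1..k} \<Longrightarrow> j \<in> {1..k} \<Longrightarrow> i \<noteq> j
      \<Longrightarrow> x \<in> S u i \<Longrightarrow> y \<in> S u j \<Longrightarrow> \<not> E x y"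

lemma k_good_obtain_partitions:
  assumes "k_good k V E" "simple_graph V E"
  obtains S where "partitioned_graph k V E S"
proof -
  from assms(1) obtain S where S: "\<forall>u\<in>V. (\<Union>i\<in>{1..k}. S u i) = nbhd E u
      \<and> (\<forall>i\<in>{1..k}. \<forall>j\<in>{1..k}. i \<noteq> j \<longrightarrow> S u i \<inter> S u j = {})
      \<and> (\<forall>i\<in>{1..k}. S u i \<noteq> {} \<longrightarrow> is_clique V E (S u i))
      \<and> (\<forall>i\<in>{1..k}. \<forall>j\<in>{1..k}. i \<noteq> j \<longrightarrow> (\<forall>x\<in>S u i. \<forall>y\<in>S u j. \<not> E x y))"
    unfolding k_good_def by (rule bchoice[THEN exE])
  have "partitioned_graph k V E S"
  proof
    show "simple_graph V E" by (fact assms(2))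
  next
    fix u assume "u \<in> V"
    then show "(\<Union>i\<in>{1..k}. S u i) = nbhd E u" using S by simp
  next
    fix u i assume "u \<in> V" "i \<in> {1..k}" "S u i \<noteq> {}"
    then show "is_clique V E (S u i)" using S by simp
  next
    fix u i j x y assume "u \<in> V" "i \<in> {1..k}" "j \<in> {1..k}" "i \<noteq> j" "x \<in> S u i" "y \<in> S u j"
    then show "\<not> E x y" using S by simp
  qed
  then show thesis ..
qed

context partitioned_graph
begin

lemma edge_in_V: "E u v \<Longrightarrow> u \<in> V"
  and edge_sym: "E u v \<Longrightarrow> E v u"
  and edge_irrefl: "\<not> E u u"
  using simple unfolding simple_graph_def by blast+

lemma edge_iff_in_part: "u \<in> V \<Longrightarrow> E u w \<longleftrightarrow> (\<exists>i\<in>{1..k}. w \<in> S u i)"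
  using parts_cover[of u] unfolding nbhd_def set_eq_iff by simp

lemma edge_to_part_member: "u \<in> V \<Longrightarrow> i \<in> {1..k} \<Longrightarrow> w \<in> S u i \<Longrightarrow> E u w"
  using edge_iff_in_part by blast

lemma common_neighbour_in_part:
  assumes u: "u \<in> V" and i: "i \<in> {1..k}" "v \<in> S u i" and "E u w" "E v w"
  shows "w \<in> S u i"
proof -
  obtain j where j: "j \<in> {1..k}" "w \<in> S u j" using \<open>E u w\<close> edge_iff_in_part[OF u] by blast
  have "j = i"
  proof (rule ccontr)
    assume "j \<noteq> i"
    with i j have "\<not> E v w" by (intro no_edge_between_parts[OF u]) auto
    with \<open>E v w\<close> show False by contradiction
  qed
  with j show ?thesis by simp
qed

lemma edge_clique_eq_insert_part:
  assumes "E u v"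
  obtains i where "i \<in> {1..k}" "v \<in> S u i" "edge_clique E u v = insert u (S u i)"
proof -
  have u: "u \<in> V" using assms by (rule edge_in_V)
  obtain i where i: "i \<in> {1..k}" "v \<in> S u i" using assms edge_iff_in_part[OF u] by blast
  have clique: "is_clique V E (S u i)" using part_clique[OF u] i by blast
  have "edge_clique E u v = insert u (S u i)"
  proof (intro equalityI subsetI)
    fix w assume "w \<in> edge_clique E u v"
    then show "w \<in> insert u (S u i)"
      unfolding edge_clique_def using common_neighbour_in_part[OF u i] i(2) by blast
  next
    fix w assume w: "w \<in> insert u (S u i)"
    show "w \<in> edge_clique E u v"
    proof (cases "w = u \<or> w = v")
      case False
      with w have "w \<in> S u i" by simp
      with False i clique have "E u w" "E v w"
        by (auto intro: edge_to_part_member[OF u] simp: is_clique_def)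
      then show ?thesis by (simp add: edge_clique_def)
    qed (auto simp: edge_clique_def)
  qed
  with i show thesis by (rule that)
qed

lemma is_clique_edge_clique:
  assumes "E u v"
  shows "is_clique V E (edge_clique E u v)"
proof -
  have u: "u \<in> V" using assms by (rule edge_in_V)
  obtain i where i: "i \<in> {1..k}" "v \<in> S u i" and eq: "edge_clique E u v = insert u (S u i)"
    using edge_clique_eq_insert_part[OF assms] .
  have "is_clique V E (S u i)" using part_clique[OF u] i by blast
  moreover have "E u w" "E w u" if "w \<in> S u i" for w
    using edge_to_part_member[OF u i(1) that] edge_sym by blast+
  ultimately show ?thesis
    using u unfolding eq is_clique_def by blast
qed

lemma edge_clique_determined:
  assumes "E u v" "x \<in> edge_clique E u v" "y \<in> edge_clique E u v" "x \<noteq> y"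
  shows "edge_clique E x y = edge_clique E u v"
proof
  have clique_uv: "is_clique V E (edge_clique E u v)"
    using is_clique_edge_clique[OF assms(1)] .
  then show uv_sub: "edge_clique E u v \<subseteq> edge_clique E x y"
    using assms(2-4) by (rule clique_subset_edge_clique)
  have "E x y" using clique_uv assms(2-4) unfolding is_clique_def by blast
  then have "is_clique V E (edge_clique E x y)" by (rule is_clique_edge_clique)
  moreover have "u \<in> edge_clique E x y" "v \<in> edge_clique E x y"
    using uv_sub unfolding edge_clique_def by blast+
  moreover have "u \<noteq> v" using edge_irrefl assms(1) by blast
  ultimately show "edge_clique E x y \<subseteq> edge_clique E u v"
    by (rule clique_subset_edge_clique)
qed

lemma is_clique_edge_cliques: "X \<in> edge_cliques E \<Longrightarrow> is_clique V E X"
  unfolding edge_cliques_def using is_clique_edge_clique by blast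

lemma finite_edge_cliques: "finite (edge_cliques E)"
proof (rule finite_subset)
  show "edge_cliques E \<subseteq> Pow V"
    using is_clique_edge_cliques unfolding is_clique_def by blast
  show "finite (Pow V)" using simple by (simp add: simple_graph_def)
qed

lemma edge_cliques_eq_edge_clique:
  assumes "X \<in> edge_cliques E" "x \<in> X" "y \<in> X" "x \<noteq> y"
  shows "X = edge_clique E x y"
  using assms edge_clique_determined unfolding edge_cliques_def by blast

lemma edge_cliques_two_vertices:
  assumes "X \<in> edge_cliques E"
  obtains x y where "x \<in> X" "y \<in> X" "x \<noteq> y"
  using assms edge_irrefl unfolding edge_cliques_def edge_clique_def by blast

lemma edge_cliques_containing_edge:
  assumes "E u v"
  shows "{X \<in> edge_cliques E. u \<in> X \<and> v \<in> X} = {edge_clique E u v}"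
proof -
  have "u \<noteq> v" using assms edge_irrefl by blast
  then show ?thesis
    using assms edge_cliques_eq_edge_clique
    unfolding edge_cliques_def edge_clique_def by blast
qed

lemma card_edge_cliques_containing_le:
  assumes u: "u \<in> V"
  shows "card {X \<in> edge_cliques E. u \<in> X} \<le> k"
proof -
  have "{X \<in> edge_cliques E. u \<in> X} \<subseteq> (\<lambda>i. insert u (S u i)) ` {1..k}"
  proof
    fix X assume "X \<in> {X \<in> edge_cliques E. u \<in> X}"
    then have X: "X \<in> edge_cliques E" "u \<in> X" by simp_all
    obtain x y where "x \<in> X" "y \<in> X" "x \<noteq> y"
      using edge_cliques_two_vertices[OF X(1)] .
    then obtain w where w: "w \<in> X" "u \<noteq> w" by blast
    have X_eq: "X = edge_clique E u w"
      using edge_cliques_eq_edge_clique[OF X w] .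
    have "E u w"
      using is_clique_edge_cliques[OF X(1)] X(2) w unfolding is_clique_def by blast
    then obtain i where "i \<in> {1..k}" "w \<in> S u i" "edge_clique E u w = insert u (S u i)"
      by (rule edge_clique_eq_insert_part)
    then show "X \<in> (\<lambda>i. insert u (S u i)) ` {1..k}"
      unfolding X_eq by (intro image_eqI)
  qed
  then have "card {X \<in> edge_cliques E. u \<in> X} \<le> card ((\<lambda>i. insert u (S u i)) ` {1..k})"
    by (simp add: card_mono)
  also have "\<dots> \<le> k"
    using card_image_le[of "{1..k}"] by simp
  finally show ?thesis .
qed

lemma mem_clique_cover_cases:
  assumes "X \<in># clique_cover k V E"
  shows "X \<in> edge_cliques E \<or> (\<exists>w\<in>V. X = {w})"
  using assms finite_edge_cliques mem_singleton_padding
  unfolding clique_cover_def by fastforce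

lemma is_clique_clique_cover: "X \<in># clique_cover k V E \<Longrightarrow> is_clique V E X"
  using mem_clique_cover_cases is_clique_edge_cliques
  unfolding is_clique_def by blast

lemma count_clique_cover_edge_clique:
  assumes "X \<in> edge_cliques E"
  shows "count (clique_cover k V E) X = 1"
proof -
  obtain x y where "x \<in> X" "y \<in> X" "x \<noteq> y"
    using edge_cliques_two_vertices[OF assms] .
  then have "X \<notin># singleton_padding V f" for f
    using mem_singleton_padding by blast
  then show ?thesis
    using assms finite_edge_cliques by (simp add: clique_cover_def not_in_iff)
qed

lemma clique_cover_inter_lt_2:
  assumes X: "X \<in># clique_cover k V E" and Y: "Y \<in># clique_cover k V E - {#X#}"
  shows "card (X \<inter> Y) < 2"
proof (rule ccontr)
  assume "\<not> card (X \<inter> Y) < 2"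
  then have "finite (X \<inter> Y)" "\<not> card (X \<inter> Y) \<le> Suc 0"
    by (simp_all add: card_ge_0_finite)
  then obtain x y where xy: "x \<in> X \<inter> Y" "y \<in> X \<inter> Y" "x \<noteq> y"
    using card_le_Suc0_iff_eq by blast
  have "Y \<in># clique_cover k V E" using Y by (rule in_diffD)
  then have "X \<in> edge_cliques E" "Y \<in> edge_cliques E"
    using X xy mem_clique_cover_cases by fastforce+
  then have "X = Y" "count (clique_cover k V E) X = 1"
    using xy edge_cliques_eq_edge_clique count_clique_cover_edge_clique by blast+
  then show False using Y by (simp add: in_diff_count)
qed

lemma size_filter_clique_cover_vertex:
  assumes u: "u \<in> V"
  shows "size (filter_mset (\<lambda>X. u \<in> X) (clique_cover k V E)) = k"
proof -
  have "finite V" using simple by (simp add: simple_graph_def)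
  then have "size (filter_mset (\<lambda>X. u \<in> X) (clique_cover k V E))
      = card {X \<in> edge_cliques E. u \<in> X} + (k - card {X \<in> edge_cliques E. u \<in> X})"
    using u finite_edge_cliques by (simp add: clique_cover_def size_filter_singleton_padding)
  then show ?thesis
    using card_edge_cliques_containing_le[OF u] by simp
qed

lemma size_filter_clique_cover_edge:
  assumes "E u v"
  shows "size (filter_mset (\<lambda>X. u \<in> X \<and> v \<in> X) (clique_cover k V E)) = 1"
proof -
  have "u \<noteq> v" using assms edge_irrefl by blast
  then show ?thesis
    using finite_edge_cliques edge_cliques_containing_edge[OF assms]
    by (simp add: clique_cover_def filter_singleton_padding_two)
qed

end

theorem proposition4p6:
  fixes k :: nat and V :: "'a set" and E :: "'a \<Rightarrow> 'a \<Rightarrow> bool"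
  assumes "k \<ge> 1" and "simple_graph V E" and "k_good k V E"
  shows "\<exists>Msets :: 'a set multiset.
            (\<forall>X\<in>#Msets. X \<subseteq> V)
          \<and> (\<forall>X\<in>#Msets. \<forall>Y\<in>#(Msets - {#X#}). card (X \<inter> Y) < 2)
          \<and> (\<forall>X\<in>#Msets. is_clique V E X)
          \<and> (\<forall>u\<in>V. size (filter_mset (\<lambda>X. u \<in> X) Msets) = k)
          \<and> (\<forall>u v. E u v \<longrightarrow> size (filter_mset (\<lambda>X. u \<in> X \<and> v \<in> X) Msets) = 1)"
proof -
  obtain S where "partitioned_graph k V E S"
    using assms(3,2) by (rule k_good_obtain_partitions)
  then interpret partitioned_graph k V E S .
  show ?thesis
  proof (intro exI conjI ballI allI impI)
    fix X assume "X \<in># clique_cover k V E"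
    then show "X \<subseteq> V" "is_clique V E X"
      using is_clique_clique_cover unfolding is_clique_def by blast+
  qed (simp_all add: clique_cover_inter_lt_2 size_filter_clique_cover_vertex
      size_filter_clique_cover_edge)
qed

end
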